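(* Let $S\subset\mathbb{Z}^d$ be a finite set, $\mathcal{P}=\{P_\alpha\}_{\alpha\in S}$ a resolution of unity on $\mathbb{C}^D$ and $C$ a $D\times D$ unitary matrix. If $U(S,\mathcal{P},C)$ has an eigenvalue, then there exist a nonzero vector $\phi\in\mathbb{C}^D$ and a point $x_o\in\mathbb{Z}^d$ such that $\limsup_{n\to\infty}p_n(\phi;x_o)>0$.
   Context: A resolution of unity on $\mathbb{C}^D$ indexed by a finite $S\subset\mathbb{Z}^d$ is a family of orthogonal projections $P_\alpha$ with $P_\alpha P_\beta=0$ for $\alpha\ne\beta$ and $\sum_{\alpha\in S}P_\alpha=I$. For $\alpha\in\mathbb{Z}^d$, $\tau^\alpha$ acts on $\ell^2(\mathbb{Z}^d,\mathbb{C}^D)$ by $(\tau^\alpha f)(x)=f(x-\alpha)$. $U(S,\mathcal{P},C)=\big(\sum_{\alpha\in S}\tau^\alpha P_\alpha\big)C$, with $C$ acting pointwise. $\delta_0\otimes\phi$ is the function equal to $\phi$ at $0$ and $0$ elsewhere and $p_n(\phi;x)=\|U(S,\mathcal{P},C)^n(\delta_0\otimes\phi)(x)\|^2_{\mathbb{C}^D}$. Eigenvalue means an element of the point spectrum. *)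

theory Defs
  imports "HOL-Analysis.Analysis"
begin

definition mat_adjoint :: "complex^'D^'D \<Rightarrow> complex^'D^'D" where
  "mat_adjoint A = (\<chi> i j. cnj (A $ j $ i))"

definition orth_proj :: "complex^'D^'D \<Rightarrow> bool" where
  "orth_proj P \<longleftrightarrow> P ** P = P \<and> mat_adjoint P = P"

definition unitary_mat :: "complex^'D^'D \<Rightarrow> bool" where
  "unitary_mat C \<longleftrightarrow> mat_adjoint C ** C = mat 1 \<and> C ** mat_adjoint C = mat 1"

definition resolution_of_unity :: "(int^'d) set \<Rightarrow> (int^'d \<Rightarrow> complex^'D^'D) \<Rightarrow> bool" where
  "resolution_of_unity S P \<longleftrightarrow>
     (\<forall>\<alpha>\<in>S. orth_proj (P \<alpha>)) \<and>
     (\<forall>\<alpha>\<in>S. \<forall>\<beta>\<in>S. \<alpha> \<noteq> \<beta> \<longrightarrow> P \<alpha> ** P \<beta> = 0) \<and>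
     (\<Sum>\<alpha>\<in>S. P \<alpha>) = mat 1"

definition l2_fun :: "(int^'d \<Rightarrow> complex^'D) \<Rightarrow> bool" where
  "l2_fun f \<longleftrightarrow> (\<lambda>x. (norm (f x))^2) summable_on UNIV"

text \<open>U(S,P,C) = (\<Sum>_{\<alpha>\<in>S} \<tau>^\<alpha> P_\<alpha>) C, with (\<tau>^\<alpha> g)(x) = g(x - \<alpha>).\<close>
definition U_op :: "(int^'d) set \<Rightarrow> (int^'d \<Rightarrow> complex^'D^'D) \<Rightarrow> complex^'D^'D
                    \<Rightarrow> (int^'d \<Rightarrow> complex^'D) \<Rightarrow> (int^'d \<Rightarrow> complex^'D)" where
  "U_op S P C f = (\<lambda>x. \<Sum>\<alpha>\<in>S. P \<alpha> *v (C *v f (x - \<alpha>)))"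

definition has_eigenvalue :: "(int^'d) set \<Rightarrow> (int^'d \<Rightarrow> complex^'D^'D) \<Rightarrow> complex^'D^'D \<Rightarrow> bool" where
  "has_eigenvalue S P C \<longleftrightarrow>
     (\<exists>\<mu>::complex. \<exists>f. l2_fun f \<and> f \<noteq> (\<lambda>x. 0) \<and> U_op S P C f = (\<lambda>x. \<mu> *s f x))"

definition delta0 :: "complex^'D \<Rightarrow> (int^'d \<Rightarrow> complex^'D)" where
  "delta0 \<phi> = (\<lambda>x. if x = 0 then \<phi> else 0)"

definition p_prob :: "(int^'d) set \<Rightarrow> (int^'d \<Rightarrow> complex^'D^'D) \<Rightarrow> complex^'D^'D
                      \<Rightarrow> nat \<Rightarrow> complex^'D \<Rightarrow> int^'d \<Rightarrow> real" where
  "p_prob S P C n \<phi> x = (norm (((U_op S P C) ^^ n) (delta0 \<phi>) x))^2"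

end

theory Submission
  imports Defs
begin

text \<open>The walk U is an isometry of l2: the projections P\<alpha> split each value orthogonally, the shifts
  \<tau>\<alpha> preserve l2 sums and C is unitary.  Let f be an eigenvector, f y \<noteq> 0, and let g be the
  localised state \<delta>y \<otimes> f y.  Since the eigenvalue is unimodular, |\<langle>U^n g, f\<rangle>| = |\<langle>g, f\<rangle>| = |f y|^2 for
  every n.  If instead every p_n(\<phi>; x) tended to 0, the bounded sequence U^n g would tend to 0
  pointwise, hence weakly, so \<langle>U^n g, f\<rangle> \<rightarrow> 0, a contradiction.\<close>

section \<open>The Hermitian inner product on C^n\<close>

definition cinner :: "complex^'n \<Rightarrow> complex^'n \<Rightarrow> complex" where
  "cinner v w = (\<Sum>i\<in>UNIV. v$i * cnj (w$i))"

lemma norm_vec_power2: "norm (v::complex^'n) ^ 2 = (\<Sum>i\<in>UNIV. (cmod (v$i))^2)"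
  unfolding norm_vec_def L2_set_def by (simp add: sum_nonneg)

lemma cinner_self: "cinner v v = complex_of_real (norm v ^ 2)"
  unfolding cinner_def norm_vec_power2 of_real_sum
  by (rule sum.cong) (simp_all add: complex_norm_square[symmetric])

lemma norm_cinner_le_sum: "cmod (cinner v w) \<le> (\<Sum>i\<in>UNIV. cmod (v$i) * cmod (w$i))"
  unfolding cinner_def by (rule order_trans[OF norm_sum]) (simp add: norm_mult)

lemma norm_cinner_le_weighted:
  assumes "t > 0"
  shows "cmod (cinner v w) \<le> t * norm v ^ 2 + norm w ^ 2 / (4 * t)"
proof -
  have "cmod (cinner v w) \<le> (\<Sum>i\<in>UNIV. cmod (v$i) * cmod (w$i))"
    by (rule norm_cinner_le_sum)
  also have "\<dots> \<le> (\<Sum>i\<in>UNIV. t * (cmod (v$i))^2 + (cmod (w$i))^2 / (4 * t))"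
  proof (rule sum_mono)
    fix i
    have "0 \<le> (2 * t * cmod (v$i) - cmod (w$i))^2 / (4 * t)"
      using assms by simp
    then show "cmod (v$i) * cmod (w$i) \<le> t * (cmod (v$i))^2 + (cmod (w$i))^2 / (4 * t)"
      using assms by (simp add: power2_eq_square field_simps)
  qed
  also have "\<dots> = t * norm v ^ 2 + norm w ^ 2 / (4 * t)"
    by (simp add: norm_vec_power2 sum.distrib sum_distrib_left sum_divide_distrib)
  finally show ?thesis .
qed

lemma norm_cinner_le_l1: "cmod (cinner v w) \<le> norm v * (\<Sum>i\<in>UNIV. cmod (w$i))"
proof -
  have "cmod (cinner v w) \<le> (\<Sum>i\<in>UNIV. cmod (v$i) * cmod (w$i))"
    by (rule norm_cinner_le_sum)
  also have "\<dots> \<le> (\<Sum>i\<in>UNIV. norm v * cmod (w$i))"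
    by (intro sum_mono mult_right_mono Finite_Cartesian_Product.norm_nth_le) simp
  finally show ?thesis by (simp add: sum_distrib_left)
qed

lemma cinner_matrix_left: "cinner (A *v v) w = cinner v (mat_adjoint A *v w)"
  unfolding cinner_def mat_adjoint_def matrix_vector_mult_def
  by (simp add: sum_distrib_left sum_distrib_right mult_ac) (rule sum.swap)

lemma cinner_sum_left: "cinner (\<Sum>a\<in>S. v a) w = (\<Sum>a\<in>S. cinner (v a) w)"
  unfolding cinner_def by (simp add: sum_distrib_right sum.swap[of _ S])

lemma cinner_sum_right: "cinner v (\<Sum>a\<in>S. w a) = (\<Sum>a\<in>S. cinner v (w a))"
  unfolding cinner_def by (simp add: sum_distrib_left sum.swap[of _ S])

lemma cinner_zero_left [simp]: "cinner 0 w = 0"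
  unfolding cinner_def by simp

lemma cinner_scale_left: "cinner (c *s v) w = c * cinner v w"
  unfolding cinner_def by (simp add: sum_distrib_left mult_ac)

lemma cinner_scale_right: "cinner v (c *s w) = cnj c * cinner v w"
  unfolding cinner_def by (simp add: sum_distrib_left mult_ac)

lemma sum_matrix_vector_mult: "(\<Sum>a\<in>S. A a) *v v = (\<Sum>a\<in>S. A a *v v)"
  by (simp add: vec_eq_iff matrix_vector_mult_def sum_distrib_right sum.swap[of _ S])

lemma cinner_unitary:
  assumes "unitary_mat C"
  shows "cinner (C *v v) (C *v w) = cinner v w"
  using assms unfolding unitary_mat_def
  by (simp add: cinner_matrix_left matrix_vector_mul_assoc)

section \<open>Resolutions of unity\<close>

lemma cinner_proj_proj:
  assumes "resolution_of_unity S P" "\<alpha> \<in> S" "\<beta> \<in> S"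
  shows "cinner (P \<alpha> *v v) (P \<beta> *v w) = (if \<alpha> = \<beta> then cinner v (P \<alpha> *v w) else 0)"
proof -
  have "mat_adjoint (P \<alpha>) = P \<alpha>" "P \<alpha> ** P \<alpha> = P \<alpha>"
    "\<alpha> \<noteq> \<beta> \<Longrightarrow> P \<alpha> ** P \<beta> = 0"
    using assms unfolding resolution_of_unity_def orth_proj_def by auto
  moreover have "cinner (P \<alpha> *v v) (P \<beta> *v w) = cinner v ((mat_adjoint (P \<alpha>) ** P \<beta>) *v w)"
    by (simp add: cinner_matrix_left matrix_vector_mul_assoc)
  ultimately show ?thesis
    by (auto simp: cinner_def)
qed

lemma cinner_sum_proj:
  assumes "finite S" "resolution_of_unity S P"
  shows "cinner (\<Sum>\<alpha>\<in>S. P \<alpha> *v v \<alpha>) (\<Sum>\<beta>\<in>S. P \<beta> *v w \<beta>)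
       = (\<Sum>\<alpha>\<in>S. cinner (v \<alpha>) (P \<alpha> *v w \<alpha>))"
proof -
  have "cinner (\<Sum>\<alpha>\<in>S. P \<alpha> *v v \<alpha>) (\<Sum>\<beta>\<in>S. P \<beta> *v w \<beta>)
      = (\<Sum>\<alpha>\<in>S. \<Sum>\<beta>\<in>S. if \<alpha> = \<beta> then cinner (v \<alpha>) (P \<alpha> *v w \<beta>) else 0)"
    by (simp add: cinner_sum_left cinner_sum_right cinner_proj_proj[OF assms(2)]) (rule sum.swap)
  then show ?thesis
    using assms(1) by (simp add: sum.delta)
qed

lemma sum_cinner_proj:
  assumes "resolution_of_unity S P"
  shows "(\<Sum>\<alpha>\<in>S. cinner v (P \<alpha> *v w)) = cinner v w"
  using assms sum_matrix_vector_mult[of P S w]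
  unfolding resolution_of_unity_def by (simp add: cinner_sum_right[symmetric])

section \<open>Square-summable functions on Z^d\<close>

definition l2_inner :: "('a \<Rightarrow> complex^'n) \<Rightarrow> ('a \<Rightarrow> complex^'n) \<Rightarrow> complex" where
  "l2_inner h k = (\<Sum>\<^sub>\<infinity>x. cinner (h x) (k x))"

lemma has_sum_sum:
  fixes f :: "'i \<Rightarrow> 'a \<Rightarrow> 'b::topological_comm_monoid_add"
  assumes "finite I" "\<And>i. i \<in> I \<Longrightarrow> (f i has_sum s i) A"
  shows "((\<lambda>x. \<Sum>i\<in>I. f i x) has_sum (\<Sum>i\<in>I. s i)) A"
  using assms by (induction I rule: finite_induct) (auto intro: has_sum_add)

lemma has_sum_translate:
  "((\<lambda>x. f (x - a)) has_sum s) UNIV \<longleftrightarrow> (f has_sum s) (UNIV :: 'a::ab_group_add set)"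
  by (rule has_sum_reindex_bij_betw, rule bij_betwI[where g = "\<lambda>x. x + a"]) auto

lemma has_sum_sum_translates:
  fixes G :: "'a::ab_group_add \<Rightarrow> 'a \<Rightarrow> 'b::topological_comm_monoid_add"
  assumes "finite S" "\<And>\<alpha>. \<alpha> \<in> S \<Longrightarrow> (G \<alpha> has_sum s \<alpha>) UNIV"
  shows "((\<lambda>x. \<Sum>\<alpha>\<in>S. G \<alpha> (x - \<alpha>)) has_sum (\<Sum>\<alpha>\<in>S. s \<alpha>)) UNIV"
  using assms(1)
proof (rule has_sum_sum)
  fix \<alpha> assume "\<alpha> \<in> S"
  then show "((\<lambda>x. G \<alpha> (x - \<alpha>)) has_sum s \<alpha>) UNIV"
    by (rule has_sum_translate[of "G \<alpha>" \<alpha>, THEN iffD2, OF assms(2)])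
qed

lemma infsum_split_finite:
  fixes f :: "'a \<Rightarrow> 'b::banach"
  assumes "f summable_on UNIV" "finite F"
  shows "(\<Sum>\<^sub>\<infinity>x. f x) = (\<Sum>x\<in>F. f x) + (\<Sum>\<^sub>\<infinity>x\<in>-F. f x)"
proof -
  have "(\<Sum>\<^sub>\<infinity>x\<in>F \<union> -F. f x) = (\<Sum>\<^sub>\<infinity>x\<in>F. f x) + (\<Sum>\<^sub>\<infinity>x\<in>-F. f x)"
    by (intro infsum_Un_disjoint summable_on_subset_banach[OF assms(1)]) auto
  then show ?thesis
    using assms(2) by simp
qed

lemma abs_summable_cinner_matrix:
  assumes "l2_fun h" "l2_fun k"
  shows "(\<lambda>x. cmod (cinner (A *v h x) (B *v k x))) summable_on UNIV"
proof -
  obtain K1 where K1: "K1 \<ge> 0" "\<And>v. norm (A *v v) \<le> norm v * K1"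
    using bounded_linear.nonneg_bounded[OF matrix_vector_mul_bounded_linear] by blast
  obtain K2 where K2: "K2 \<ge> 0" "\<And>v. norm (B *v v) \<le> norm v * K2"
    using bounded_linear.nonneg_bounded[OF matrix_vector_mul_bounded_linear] by blast
  have "(\<lambda>x. K1^2 * (norm (h x))^2 + K2^2 / 4 * (norm (k x))^2) summable_on UNIV"
    using assms unfolding l2_fun_def by (intro summable_on_add summable_on_cmult_right)
  then show ?thesis
  proof (rule summable_on_comparison_test)
    fix x
    have "cmod (cinner (A *v h x) (B *v k x)) \<le> norm (A *v h x) ^ 2 + norm (B *v k x) ^ 2 / 4"
      using norm_cinner_le_weighted[of 1] by simp
    also have "\<dots> \<le> (norm (h x) * K1)^2 + (norm (k x) * K2)^2 / 4"
      using K1 K2 by (intro add_mono divide_right_mono power_mono) auto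
    finally show "cmod (cinner (A *v h x) (B *v k x))
        \<le> K1^2 * (norm (h x))^2 + K2^2 / 4 * (norm (k x))^2"
      by (simp add: power_mult_distrib mult_ac)
  qed simp
qed

lemma abs_summable_cinner:
  assumes "l2_fun h" "l2_fun k"
  shows "(\<lambda>x. cmod (cinner (h x) (k x))) summable_on UNIV"
  using abs_summable_cinner_matrix[OF assms, of "mat 1" "mat 1"] by (simp only: matrix_vector_mul_lid)

lemma l2_inner_self:
  assumes "l2_fun h"
  shows "l2_inner h h = complex_of_real (\<Sum>\<^sub>\<infinity>x. (norm (h x))^2)"
  using has_sum_of_real[OF has_sum_infsum[OF assms[unfolded l2_fun_def]]]
  unfolding l2_inner_def cinner_self by (rule infsumI)

lemma l2_inner_scale_right: "l2_inner h (\<lambda>x. c *s k x) = cnj c * l2_inner h k"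
  unfolding l2_inner_def cinner_scale_right by (rule infsum_cmult_right')

lemma l2_norm_restrict_le:
  assumes "l2_fun h"
  shows "(\<Sum>\<^sub>\<infinity>x\<in>X. (norm (h x))^2) \<le> (\<Sum>\<^sub>\<infinity>x. (norm (h x))^2)"
proof -
  have h: "(\<lambda>x. (norm (h x))^2) summable_on UNIV"
    using assms unfolding l2_fun_def .
  show ?thesis
    by (rule infsum_mono_neutral[OF summable_on_subset_banach[OF h subset_UNIV] h]) auto
qed

lemma has_sum_at_single_point:
  assumes "\<And>x. x \<noteq> y \<Longrightarrow> f x = 0"
  shows "(f has_sum f y) UNIV"
  by (rule has_sum_finite_neutralI[of "{y}"]) (use assms in auto)

section \<open>The walk operator is an isometry\<close>

lemma cinner_U_op:
  assumes "finite S" "resolution_of_unity S P"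
  shows "cinner (U_op S P C h x) (U_op S P C k x)
       = (\<Sum>\<alpha>\<in>S. cinner (C *v h (x - \<alpha>)) ((P \<alpha> ** C) *v k (x - \<alpha>)))"
  unfolding U_op_def by (subst cinner_sum_proj[OF assms]) (simp add: matrix_vector_mul_assoc)

lemma l2_fun_U_op:
  assumes "finite S" "resolution_of_unity S P" "l2_fun h"
  shows "l2_fun (U_op S P C h)"
proof -
  define G where "G \<alpha> y = cmod (cinner (C *v h y) ((P \<alpha> ** C) *v h y))" for \<alpha> y
  have G: "(G \<alpha> has_sum (\<Sum>\<^sub>\<infinity>y. G \<alpha> y)) UNIV" for \<alpha>
    unfolding G_def by (rule has_sum_infsum, rule abs_summable_cinner_matrix[OF assms(3,3)])
  have "(\<lambda>x. \<Sum>\<alpha>\<in>S. G \<alpha> (x - \<alpha>)) summable_on UNIV"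
    by (rule has_sum_imp_summable, rule has_sum_sum_translates[OF assms(1)]) (rule G)
  then show ?thesis
    unfolding l2_fun_def
  proof (rule summable_on_comparison_test)
    fix x
    have "(norm (U_op S P C h x))^2 = cmod (cinner (U_op S P C h x) (U_op S P C h x))"
      by (simp add: cinner_self norm_power)
    also have "\<dots> \<le> (\<Sum>\<alpha>\<in>S. G \<alpha> (x - \<alpha>))"
      unfolding cinner_U_op[OF assms(1,2)] G_def by (rule norm_sum)
    finally show "(norm (U_op S P C h x))^2 \<le> (\<Sum>\<alpha>\<in>S. G \<alpha> (x - \<alpha>))" .
  qed simp
qed

lemma l2_inner_U_op:
  assumes "finite S" "resolution_of_unity S P" "unitary_mat C" "l2_fun h" "l2_fun k"
  shows "l2_inner (U_op S P C h) (U_op S P C k) = l2_inner h k"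
proof -
  define G where "G \<alpha> y = cinner (C *v h y) ((P \<alpha> ** C) *v k y)" for \<alpha> y
  have G: "(G \<alpha> has_sum (\<Sum>\<^sub>\<infinity>y. G \<alpha> y)) UNIV" for \<alpha>
    unfolding G_def
    by (rule has_sum_infsum, rule abs_summable_summable, rule abs_summable_cinner_matrix[OF assms(4,5)])
  have "(\<Sum>\<alpha>\<in>S. G \<alpha> y) = cinner (h y) (k y)" for y
    using sum_cinner_proj[OF assms(2), of "C *v h y" "C *v k y"] cinner_unitary[OF assms(3)]
    by (simp add: G_def matrix_vector_mul_assoc)
  moreover have "((\<lambda>y. \<Sum>\<alpha>\<in>S. G \<alpha> y) has_sum (\<Sum>\<alpha>\<in>S. \<Sum>\<^sub>\<infinity>y. G \<alpha> y)) UNIV"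
    by (rule has_sum_sum[OF assms(1)]) (rule G)
  ultimately have "((\<lambda>y. cinner (h y) (k y)) has_sum (\<Sum>\<alpha>\<in>S. \<Sum>\<^sub>\<infinity>y. G \<alpha> y)) UNIV"
    by simp
  then have "l2_inner h k = (\<Sum>\<alpha>\<in>S. \<Sum>\<^sub>\<infinity>y. G \<alpha> y)"
    unfolding l2_inner_def by (rule infsumI)
  moreover have "((\<lambda>x. cinner (U_op S P C h x) (U_op S P C k x)) has_sum (\<Sum>\<alpha>\<in>S. \<Sum>\<^sub>\<infinity>y. G \<alpha> y)) UNIV"
    unfolding cinner_U_op[OF assms(1,2)] G_def[symmetric] by (rule has_sum_sum_translates[OF assms(1)]) (rule G)
  then have "l2_inner (U_op S P C h) (U_op S P C k) = (\<Sum>\<alpha>\<in>S. \<Sum>\<^sub>\<infinity>y. G \<alpha> y)"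
    unfolding l2_inner_def by (rule infsumI)
  ultimately show ?thesis
    by simp
qed

lemma l2_fun_U_op_iter:
  assumes "finite S" "resolution_of_unity S P" "l2_fun h"
  shows "l2_fun ((U_op S P C ^^ n) h)"
  by (induction n) (simp_all add: assms l2_fun_U_op)

lemma l2_inner_U_op_iter:
  assumes "finite S" "resolution_of_unity S P" "unitary_mat C" "l2_fun h" "l2_fun k"
  shows "l2_inner ((U_op S P C ^^ n) h) ((U_op S P C ^^ n) k) = l2_inner h k"
  by (induction n) (simp_all add: assms l2_inner_U_op l2_fun_U_op_iter)

lemma l2_norm_U_op_iter:
  assumes "finite S" "resolution_of_unity S P" "unitary_mat C" "l2_fun h"
  shows "(\<Sum>\<^sub>\<infinity>x. (norm ((U_op S P C ^^ n) h x))^2) = (\<Sum>\<^sub>\<infinity>x. (norm (h x))^2)"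
  using l2_inner_U_op_iter[OF assms assms(4), of n]
  by (simp add: l2_inner_self assms l2_fun_U_op_iter)

lemma U_op_iter_translate:
  "(U_op S P C ^^ n) (\<lambda>x. h (x - y)) = (\<lambda>x. (U_op S P C ^^ n) h (x - y))"
proof -
  have "U_op S P C (\<lambda>x. k (x - y)) = (\<lambda>x. U_op S P C k (x - y))" for k
    unfolding U_op_def by (simp add: algebra_simps)
  then show ?thesis
    by (induction n) simp_all
qed

lemma eigenvalue_unimodular:
  assumes "finite S" "resolution_of_unity S P" "unitary_mat C"
    and "l2_fun f" "f y \<noteq> 0" "U_op S P C f = (\<lambda>x. \<mu> *s f x)"
  shows "cmod \<mu> = 1"
proof -
  have "0 < (norm (f y))^2" using assms(5) by simp
  also have "\<dots> \<le> (\<Sum>\<^sub>\<infinity>x. (norm (f x))^2)"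
    using l2_norm_restrict_le[OF assms(4), of "{y}"] by simp
  finally have "l2_inner f f \<noteq> 0" by (simp add: l2_inner_self[OF assms(4)])
  moreover have "l2_inner f f = cnj \<mu> * \<mu> * l2_inner f f"
    using l2_inner_U_op[OF assms(1-4,4)]
    by (simp add: assms(6) l2_inner_scale_right l2_inner_def cinner_scale_left infsum_cmult_right')
  ultimately have "cnj \<mu> * \<mu> = 1"
    by simp
  then have "(cmod \<mu>)^2 = 1"
    by (metis complex_norm_square mult.commute of_real_eq_1_iff)
  then show ?thesis
    using norm_ge_zero[of \<mu>] by (auto simp: power2_eq_1_iff)
qed

lemma norm_l2_inner_U_op_iter_eigenvector:
  assumes "finite S" "resolution_of_unity S P" "unitary_mat C"
    and "l2_fun f" "U_op S P C f = (\<lambda>x. \<mu> *s f x)" "cmod \<mu> = 1" "l2_fun h"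
  shows "cmod (l2_inner ((U_op S P C ^^ n) h) f) = cmod (l2_inner h f)"
proof (induction n)
  case (Suc n)
  have "l2_inner ((U_op S P C ^^ n) h) f = cnj \<mu> * l2_inner ((U_op S P C ^^ Suc n) h) f"
    using l2_inner_U_op[OF assms(1-3) l2_fun_U_op_iter[OF assms(1,2,7)] assms(4)]
    by (simp add: assms(5) l2_inner_scale_right)
  then show ?case
    using Suc assms(6) by (simp add: norm_mult)
qed simp

section \<open>Pointwise convergence of bounded sequences in l2 is weak convergence\<close>

lemma norm_infsum_cinner_le:
  assumes "l2_fun h" "l2_fun k" "t > 0"
  shows "cmod (\<Sum>\<^sub>\<infinity>x\<in>X. cinner (h x) (k x))
       \<le> t * (\<Sum>\<^sub>\<infinity>x\<in>X. (norm (h x))^2) + (\<Sum>\<^sub>\<infinity>x\<in>X. (norm (k x))^2) / (4 * t)"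
proof -
  have "(\<lambda>x. (norm (h x))^2) summable_on X" "(\<lambda>x. (norm (k x))^2) summable_on X"
    using assms(1,2) unfolding l2_fun_def by (auto intro: summable_on_subset_banach[OF _ subset_UNIV])
  then have weighted: "((\<lambda>x. t * (norm (h x))^2 + (norm (k x))^2 / (4 * t)) has_sum
      (t * (\<Sum>\<^sub>\<infinity>x\<in>X. (norm (h x))^2) + (\<Sum>\<^sub>\<infinity>x\<in>X. (norm (k x))^2) / (4 * t))) X"
    by (intro has_sum_add has_sum_cmult_right has_sum_divide_const has_sum_infsum)
  have abs: "(\<lambda>x. cmod (cinner (h x) (k x))) summable_on X"
    using abs_summable_cinner[OF assms(1,2)] by (rule summable_on_subset_banach) simp
  then have "cmod (\<Sum>\<^sub>\<infinity>x\<in>X. cinner (h x) (k x)) \<le> (\<Sum>\<^sub>\<infinity>x\<in>X. cmod (cinner (h x) (k x)))"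
    by (rule norm_infsum_bound)
  also have "\<dots> \<le> (\<Sum>\<^sub>\<infinity>x\<in>X. t * (norm (h x))^2 + (norm (k x))^2 / (4 * t))"
    by (intro infsum_mono abs has_sum_imp_summable[OF weighted] norm_cinner_le_weighted assms(3))
  also have "\<dots> = t * (\<Sum>\<^sub>\<infinity>x\<in>X. (norm (h x))^2) + (\<Sum>\<^sub>\<infinity>x\<in>X. (norm (k x))^2) / (4 * t)"
    using weighted by (rule infsumI)
  finally show ?thesis .
qed

lemma norm_sum_cinner_le:
  assumes "\<And>x. x \<in> F \<Longrightarrow> norm (h x) \<le> \<delta>"
  shows "cmod (\<Sum>x\<in>F. cinner (h x) (k x)) \<le> \<delta> * (\<Sum>x\<in>F. \<Sum>i\<in>UNIV. cmod (k x $ i))"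
proof -
  have "cmod (\<Sum>x\<in>F. cinner (h x) (k x)) \<le> (\<Sum>x\<in>F. norm (h x) * (\<Sum>i\<in>UNIV. cmod (k x $ i)))"
    by (intro order_trans[OF norm_sum] sum_mono norm_cinner_le_l1)
  also have "\<dots> \<le> (\<Sum>x\<in>F. \<delta> * (\<Sum>i\<in>UNIV. cmod (k x $ i)))"
    using assms by (intro sum_mono mult_right_mono sum_nonneg) auto
  finally show ?thesis
    by (simp add: sum_distrib_left)
qed

lemma l2_tail_small:
  assumes "l2_fun f" "\<epsilon> > 0"
  obtains F where "finite F" "(\<Sum>\<^sub>\<infinity>x\<in>-F. (norm (f x))^2) < \<epsilon>"
proof -
  have sf: "(\<lambda>x. (norm (f x))^2) summable_on UNIV"
    using assms(1) unfolding l2_fun_def .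
  obtain F where "finite F" "dist (\<Sum>x\<in>F. (norm (f x))^2) (\<Sum>\<^sub>\<infinity>x. (norm (f x))^2) \<le> \<epsilon> / 2"
    using infsum_finite_approximation[OF sf, of "\<epsilon> / 2"] assms(2) by auto
  then show ?thesis
    using that infsum_split_finite[OF sf \<open>finite F\<close>] assms(2) by (simp add: dist_real_def)
qed

lemma l2_inner_tendsto_zero:
  assumes a: "\<And>n. l2_fun (a n)" "\<And>n. (\<Sum>\<^sub>\<infinity>x. (norm (a n x))^2) \<le> B"
    and pointwise: "\<And>x. (\<lambda>n. a n x) \<longlonglongrightarrow> 0" and f: "l2_fun f"
  shows "(\<lambda>n. l2_inner (a n) f) \<longlonglongrightarrow> 0"
proof (rule tendstoI)
  fix \<epsilon> :: real assume "\<epsilon> > 0"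
  \<comment> \<open>On a finite set F the a n are eventually small; off F the weight t makes the tail of a n
    contribute at most t B and the choice of F makes the tail of f contribute at most \<epsilon>/4.\<close>
  define t where "t = \<epsilon> / (4 * (B + 1))"
  have "B \<ge> 0"
    using a(2)[of 0] infsum_nonneg[of UNIV "\<lambda>x. (norm (a 0 x))^2"] by simp
  then have t: "t > 0" "t * B < \<epsilon> / 4"
    using \<open>\<epsilon> > 0\<close> by (auto simp: t_def field_simps)
  obtain F where "finite F" and tail_f: "(\<Sum>\<^sub>\<infinity>x\<in>-F. (norm (f x))^2) < \<epsilon> * t"
    using l2_tail_small[OF f] \<open>\<epsilon> > 0\<close> t by (metis mult_pos_pos)
  define M where "M = (\<Sum>x\<in>F. \<Sum>i\<in>UNIV. cmod (f x $ i))"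
  define \<delta> where "\<delta> = \<epsilon> / (4 * (M + 1))"
  have "M \<ge> 0" unfolding M_def by (intro sum_nonneg) auto
  then have \<delta>: "\<delta> > 0" "\<delta> * M < \<epsilon> / 4"
    using \<open>\<epsilon> > 0\<close> by (auto simp: \<delta>_def field_simps)
  have "eventually (\<lambda>n. \<forall>x\<in>F. norm (a n x) < \<delta>) sequentially"
    using \<open>finite F\<close> tendstoD[OF pointwise \<delta>(1)] by (auto intro: eventually_ball_finite)
  then show "eventually (\<lambda>n. dist (l2_inner (a n) f) 0 < \<epsilon>) sequentially"
  proof (rule eventually_mono)
    fix n assume small: "\<forall>x\<in>F. norm (a n x) < \<delta>"
    have "cmod (\<Sum>x\<in>F. cinner (a n x) (f x)) \<le> \<delta> * M"
      unfolding M_def using small by (intro norm_sum_cinner_le) (auto intro: less_imp_le)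
    then have head: "cmod (\<Sum>x\<in>F. cinner (a n x) (f x)) < \<epsilon> / 4"
      using \<delta> by linarith
    have tail_a: "(\<Sum>\<^sub>\<infinity>x\<in>-F. (norm (a n x))^2) \<le> B"
      using l2_norm_restrict_le[OF a(1), of n "-F"] a(2)[of n] by linarith
    have "cmod (\<Sum>\<^sub>\<infinity>x\<in>-F. cinner (a n x) (f x))
        \<le> t * (\<Sum>\<^sub>\<infinity>x\<in>-F. (norm (a n x))^2) + (\<Sum>\<^sub>\<infinity>x\<in>-F. (norm (f x))^2) / (4 * t)"
      by (rule norm_infsum_cinner_le[OF a(1) f t(1)])
    also have "\<dots> \<le> t * B + \<epsilon> * t / (4 * t)"
      using tail_a tail_f t(1) by (intro add_mono mult_left_mono divide_right_mono) auto
    finally have tail: "cmod (\<Sum>\<^sub>\<infinity>x\<in>-F. cinner (a n x) (f x)) < \<epsilon> / 2"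
      using t by simp
    have "l2_inner (a n) f = (\<Sum>x\<in>F. cinner (a n x) (f x)) + (\<Sum>\<^sub>\<infinity>x\<in>-F. cinner (a n x) (f x))"
      unfolding l2_inner_def by (rule infsum_split_finite[OF abs_summable_summable[OF abs_summable_cinner[OF a(1) f]] \<open>finite F\<close>])
    then have "dist (l2_inner (a n) f) 0
        \<le> cmod (\<Sum>x\<in>F. cinner (a n x) (f x)) + cmod (\<Sum>\<^sub>\<infinity>x\<in>-F. cinner (a n x) (f x))"
      by (simp add: norm_triangle_ineq)
    then show "dist (l2_inner (a n) f) 0 < \<epsilon>"
      using head tail \<open>\<epsilon> > 0\<close> by linarith
  qed
qed

lemma tendsto_zero_if_limsup_norm_power2:
  fixes a :: "nat \<Rightarrow> 'a::real_normed_vector"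
  assumes "limsup (\<lambda>n. ereal ((norm (a n))^2)) \<le> 0"
  shows "a \<longlonglongrightarrow> 0"
proof (rule tendstoI)
  fix \<epsilon> :: real assume "\<epsilon> > 0"
  then have "eventually (\<lambda>n. ereal ((norm (a n))^2) < ereal (\<epsilon>^2)) sequentially"
    using assms by (intro Limsup_lessD) (simp add: le_less_trans)
  then show "eventually (\<lambda>n. dist (a n) 0 < \<epsilon>) sequentially"
    by eventually_elim (use \<open>\<epsilon> > 0\<close> power_less_imp_less_base in force)
qed

lemma delta0_translate:
  shows "l2_fun (\<lambda>x. delta0 \<phi> (x - y))"
    and "(\<Sum>\<^sub>\<infinity>x. (norm (delta0 \<phi> (x - y)))^2) = (norm \<phi>)^2"
    and "l2_inner (\<lambda>x. delta0 \<phi> (x - y)) f = cinner \<phi> (f y)"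
proof -
  have g: "delta0 \<phi> (x - y) = (if x = y then \<phi> else 0)" for x
    unfolding delta0_def by simp
  have "((\<lambda>x. (norm (delta0 \<phi> (x - y)))^2) has_sum (norm \<phi>)^2) UNIV"
    using has_sum_at_single_point[of y "\<lambda>x. (norm (delta0 \<phi> (x - y)))^2"] by (simp add: g delta0_def)
  then show "l2_fun (\<lambda>x. delta0 \<phi> (x - y))"
    and "(\<Sum>\<^sub>\<infinity>x. (norm (delta0 \<phi> (x - y)))^2) = (norm \<phi>)^2"
    unfolding l2_fun_def by (auto simp: has_sum_iff)
  show "l2_inner (\<lambda>x. delta0 \<phi> (x - y)) f = cinner \<phi> (f y)"
    using has_sum_at_single_point[of y "\<lambda>x. cinner (delta0 \<phi> (x - y)) (f x)"]
    unfolding l2_inner_def by (simp add: g delta0_def infsumI)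
qed

theorem lemma2p2:
  fixes S :: "(int^'d) set" and P :: "int^'d \<Rightarrow> complex^'D^'D" and C :: "complex^'D^'D"
  assumes "finite S"
    and "resolution_of_unity S P"
    and "unitary_mat C"
    and "has_eigenvalue S P C"
  shows "\<exists>\<phi>::complex^'D. \<exists>xo::int^'d. \<phi> \<noteq> 0 \<and>
           limsup (\<lambda>n. ereal (p_prob S P C n \<phi> xo)) > 0"
proof (rule ccontr)
  assume "\<not> ?thesis"
  then have vanish: "limsup (\<lambda>n. ereal (p_prob S P C n \<phi> x)) \<le> 0" if "\<phi> \<noteq> 0" for \<phi> x
    using that by (auto simp: not_less)
  obtain \<mu> f where f: "l2_fun f" "f \<noteq> (\<lambda>x. 0)" "U_op S P C f = (\<lambda>x. \<mu> *s f x)"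
    using assms(4) unfolding has_eigenvalue_def by blast
  then obtain y where "f y \<noteq> 0" by auto
  define g where "g = (\<lambda>x. delta0 (f y) (x - y))"
  note g = delta0_translate[of "f y" y, folded g_def]
  have "cmod (l2_inner ((U_op S P C ^^ n) g) f) = (norm (f y))^2" for n
    using norm_l2_inner_U_op_iter_eigenvector[OF assms(1-3) f(1,3) _ g(1)]
      eigenvalue_unimodular[OF assms(1-3) f(1) \<open>f y \<noteq> 0\<close> f(3)]
    by (simp add: g(3) cinner_self norm_power)
  moreover have "(\<lambda>n. l2_inner ((U_op S P C ^^ n) g) f) \<longlonglongrightarrow> 0"
  proof (rule l2_inner_tendsto_zero[OF l2_fun_U_op_iter[OF assms(1,2) g(1)] _ _ f(1)])
    show "(\<Sum>\<^sub>\<infinity>x. (norm ((U_op S P C ^^ n) g x))^2) \<le> (norm (f y))^2" for n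
      using l2_norm_U_op_iter[OF assms(1-3) g(1), of n] g(2) unfolding g_def by simp
    show "(\<lambda>n. (U_op S P C ^^ n) g x) \<longlonglongrightarrow> 0" for x
      using vanish[OF \<open>f y \<noteq> 0\<close>, of "x - y"]
      unfolding g_def U_op_iter_translate p_prob_def by (rule tendsto_zero_if_limsup_norm_power2)
  qed
  ultimately have "(\<lambda>n. (norm (f y))^2) \<longlonglongrightarrow> 0"
    using tendsto_norm[of "\<lambda>n. l2_inner ((U_op S P C ^^ n) g) f" 0] by simp
  then have "(norm (f y))^2 = 0"
    by (rule LIMSEQ_const_iff[THEN iffD1])
  then show False
    using \<open>f y \<noteq> 0\<close> by simp
qed

end
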